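(* Let $n$ be a positive integer, $0<r\le\sqrt n$, and let $M$ be the number of edges of $G\in\mathcal G(n,r)$. Then $$\mathbb E[M]=\tfrac12(n-1)\pi r^2\Big(1-\tfrac{8}{3\pi}\tfrac{r}{\sqrt n}+\tfrac{1}{2\pi}\tfrac{r^2}{n}\Big)$$ and $$\mathrm{Var}(M)<\tfrac12\pi n r^2+4\pi^2\sqrt n\, r^5.$$
   Context: $\mathcal S_n=[-\sqrt n/2,\sqrt n/2]^2$, $V=[n]$, and $\mathbf X_1,\dots,\mathbf X_n$ are independent uniform points in $\mathcal S_n$. The random geometric graph $G\in\mathcal G(n,r)$ has vertex set $V$, with distinct $u,v$ adjacent iff $\|\mathbf X_u-\mathbf X_v\|_2\le r$. *)

theory Defs
  imports "HOL-Probability.Probability"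
begin

text \<open>The square S_n = [-sqrt n/2, sqrt n/2]^2 in the Euclidean plane (real \<times> real,
  whose norm is the Euclidean norm).\<close>
definition square :: "nat \<Rightarrow> (real \<times> real) set" where
  "square n = {- sqrt (real n) / 2 .. sqrt (real n) / 2} \<times> {- sqrt (real n) / 2 .. sqrt (real n) / 2}"

definition rgg_space :: "nat \<Rightarrow> (nat \<Rightarrow> real \<times> real) measure" where
  "rgg_space n = PiM {..<n} (\<lambda>_. uniform_measure lborel (square n))"

definition num_edges :: "nat \<Rightarrow> real \<Rightarrow> (nat \<Rightarrow> real \<times> real) \<Rightarrow> real" where
  "num_edges n r X = real (card {(u, v). u < v \<and> v < n \<and> dist (X u) (X v) \<le> r})"

end

theory Submission
  imports Defs
begin

text \<open>
  Write \<open>M = \<Sum>\<^sub>u\<^sub><\<^sub>v f(X\<^sub>u, X\<^sub>v)\<close> with the kernel \<open>f(x, y) = [\<parallel>x - y\<parallel> \<le> r]\<close>.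
  Its mean is \<open>binomial n 2 \<cdot> p\<close> with \<open>p = P(\<parallel>X\<^sub>1 - X\<^sub>2\<parallel> \<le> r)\<close>; translating one point and
  applying Fubini, \<open>n\<^sup>2 p\<close> is the integral over the disk of radius \<open>r\<close> of the overlap area
  \<open>(L - |t\<^sub>1|)(L - |t\<^sub>2|)\<close> of the square \<open>[-L/2, L/2]\<^sup>2\<close> with its translate by \<open>t\<close>, \<open>L = \<surd>n\<close>,
  which is computed in closed form.
  In the variance, pairs of edges without a common vertex are uncorrelated, an edge with itself
  contributes at most \<open>p\<close>, and two edges sharing exactly one vertex contribute the variance \<open>V\<close>
  of the degree function \<open>a(x) = P(\<parallel>x - X\<parallel> \<le> r)\<close>. Since \<open>a \<le> \<pi>r\<^sup>2/n\<close> everywhere, with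
  equality at distance at least \<open>r\<close> from the boundary, \<open>V \<le> (\<pi>r\<^sup>2/n)\<^sup>2 \<cdot> 4r/\<surd>n\<close>.
\<close>

section \<open>Overlap of a square with its translates\<close>

lemma nn_integral_lborel_even:
  fixes g :: "real \<Rightarrow> ennreal"
  assumes [measurable]: "g \<in> borel_measurable borel" and even: "\<And>x. g (- x) = g x"
  shows "(\<integral>\<^sup>+x. g x \<partial>lborel) = 2 * (\<integral>\<^sup>+x. g x * indicator {0..} x \<partial>lborel)"
proof -
  have "(\<integral>\<^sup>+x. g x \<partial>lborel) = (\<integral>\<^sup>+x. g x * indicator {..<0} x + g x * indicator {0..} x \<partial>lborel)"
    by (intro nn_integral_cong) (auto simp: indicator_def)
  also have "\<dots> = (\<integral>\<^sup>+x. g x * indicator {..<0} x \<partial>lborel) + (\<integral>\<^sup>+x. g x * indicator {0..} x \<partial>lborel)"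
    by (intro nn_integral_add) auto
  also have "(\<integral>\<^sup>+x. g x * indicator {..<0} x \<partial>lborel)
      = (\<integral>\<^sup>+x. g (0 + (-1) * x) * indicator {..<0} (0 + (-1) * x) \<partial>lborel)"
    using nn_integral_real_affine[of "\<lambda>x. g x * indicator {..<0} x" "-1" 0] by simp
  also have "\<dots> = (\<integral>\<^sup>+x. g x * indicator {0..} x \<partial>lborel)"
    by (intro nn_integral_cong_AE, use AE_lborel_singleton[of 0] in eventually_elim)
      (auto simp: even indicator_def)
  finally show ?thesis by (simp add: mult_2)
qed

lemma nn_integral_lborel_pair:
  fixes f :: "real \<times> real \<Rightarrow> ennreal"
  assumes "f \<in> borel_measurable borel"
  shows "(\<integral>\<^sup>+t. f t \<partial>lborel) = (\<integral>\<^sup>+x. \<integral>\<^sup>+y. f (x, y) \<partial>lborel \<partial>lborel)"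
  using assms lborel.nn_integral_fst[of f lborel] by (simp add: lborel_prod)

lemma nn_integral_linear_Icc:
  fixes L a b :: real
  assumes "0 \<le> b" "b \<le> L" "0 \<le> a"
  shows "(\<integral>\<^sup>+t. ennreal (a * (L - t)) * indicator {0..b} t \<partial>lborel) = ennreal (a * (L * b - b^2 / 2))"
proof -
  have "((\<lambda>t. a * (L * t - t^2 / 2)) has_vector_derivative (a * (L - t))) (at t)" for t
    unfolding has_real_derivative_iff_has_vector_derivative[symmetric]
    by (auto intro!: derivative_eq_intros simp: algebra_simps)
  then have "((\<lambda>t. a * (L - t)) has_integral (a * (L * b - b^2 / 2) - a * (L * 0 - 0^2 / 2))) {0..b}"
    by (intro fundamental_theorem_of_calculus_interior[OF assms(1)]) (auto intro!: continuous_intros)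
  then show ?thesis
    using assms by (subst nn_integral_has_integral_lebesgue') auto
qed

lemma disk_weight_antiderivative:
  fixes r L t :: real
  assumes r: "0 < r" and t: "0 < t" "t < r"
  shows "((\<lambda>t. L^2 / 2 * (t * sqrt (r^2 - t^2) + r^2 * arcsin (t / r)) + L / 3 * ((r^2 - t^2) * sqrt (r^2 - t^2))
        + (- (L / 2) * (r^2 * t - t^3 / 3) + (r^2 * t^2 / 2 - t^4 / 4) / 2))
     has_real_derivative ((L - t) * (L * sqrt (r^2 - t^2) - (r^2 - t^2) / 2))) (at t)"
proof -
  have pos: "0 < r^2 - t^2" using t r by (simp add: power_strict_mono)
  have t_over_r: "-1 < t / r" "t / r < 1" using t r by (auto simp: field_simps)
  define s where "s = sqrt (r^2 - t^2)"
  have s_pos: "s > 0" and s_sq: "s * s = r^2 - t^2" using pos by (simp_all add: s_def)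
  have sqrt_eq: "sqrt (1 - (t / r)^2) = s / r"
  proof -
    have "1 - (t / r)^2 = (r^2 - t^2) / r^2" using r by (simp add: field_simps power2_eq_square)
    then show ?thesis using r by (simp add: real_sqrt_divide s_def)
  qed
  have d_rad: "((\<lambda>t. r^2 - t^2) has_real_derivative (- 2 * t)) (at t)"
    by (auto intro!: derivative_eq_intros)
  have d_sqrt: "((\<lambda>t. sqrt (r^2 - t^2)) has_real_derivative (inverse s / 2) * (- 2 * t)) (at t)"
    using DERIV_chain2[OF DERIV_real_sqrt[OF pos] d_rad] by (simp add: s_def)
  have d_arcsin: "((\<lambda>t. arcsin (t / r)) has_real_derivative inverse (sqrt (1 - (t / r)^2)) * (1 / r)) (at t)"
    using DERIV_chain2[OF DERIV_arcsin[OF t_over_r] DERIV_cdivide[OF DERIV_ident, of r]] by simp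
  have d_poly: "((\<lambda>t. - (L / 2) * (r^2 * t - t^3 / 3) + (r^2 * t^2 / 2 - t^4 / 4) / 2) has_real_derivative
      (- (L / 2) * (r^2 - t^2) + (r^2 * t - t^3) / 2)) (at t)"
    by (auto intro!: derivative_eq_intros simp: field_simps power2_eq_square power3_eq_cube)
  note derivative = DERIV_add[OF DERIV_add[OF
      DERIV_cmult[OF DERIV_add[OF DERIV_mult[OF DERIV_ident d_sqrt] DERIV_cmult[OF d_arcsin, of "r^2"]], of "L^2 / 2"]
      DERIV_cmult[OF DERIV_mult[OF d_rad d_sqrt], of "L / 3"]] d_poly]
  show ?thesis
  proof (rule DERIV_cong[OF derivative], goal_cases)
    case 1
    show ?case using s_sq s_pos r unfolding sqrt_eq s_def[symmetric]
      by (simp add: field_simps power2_eq_square power3_eq_cube) algebra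
  qed
qed

lemma nn_integral_disk_weight:
  fixes r L :: real
  assumes r: "0 < r" and rL: "r \<le> L"
  shows "(\<integral>\<^sup>+t. ennreal ((L - t) * (L * sqrt (r^2 - t^2) - (r^2 - t^2) / 2)) * indicator {0..r} t \<partial>lborel)
     = ennreal (L^2 * pi * r^2 / 4 - 2 * L * r^3 / 3 + r^4 / 8)"
proof -
  define F where "F = (\<lambda>t::real. (L^2/2)*(t * sqrt(r^2-t^2) + r^2*arcsin(t/r)) + (L/3)*((r^2-t^2) * sqrt(r^2-t^2))
        + (- (L/2)*(r^2*t - t^3/3) + (r^2*t^2/2 - t^4/4)/2))"
  have "continuous_on {0..r} F"
    unfolding F_def using r by (intro continuous_intros) (auto simp: field_simps)
  moreover have "(F has_vector_derivative ((L - t) * (L * sqrt (r^2 - t^2) - (r^2 - t^2) / 2))) (at t)"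
    if "t \<in> {0<..<r}" for t
    using disk_weight_antiderivative[of r t L] that r unfolding F_def
    by (simp add: has_real_derivative_iff_has_vector_derivative)
  ultimately have integral:
    "((\<lambda>t. (L - t) * (L * sqrt (r^2 - t^2) - (r^2 - t^2) / 2)) has_integral (F r - F 0)) {0..r}"
    using r by (intro fundamental_theorem_of_calculus_interior) auto
  have "0 \<le> (L - t) * (L * sqrt (r^2 - t^2) - (r^2 - t^2) / 2)" if "t \<in> {0..r}" for t
  proof -
    have "t^2 \<le> r^2" "r^2 \<le> L^2" using that r rL by (auto intro: power_mono)
    then have "0 \<le> r^2 - t^2" "r^2 - t^2 \<le> L^2" using zero_le_power2[of t] by linarith+
    then have chord: "0 \<le> r^2 - t^2" "sqrt (r^2 - t^2) \<le> L"
      using real_sqrt_le_mono[of "r^2 - t^2" "L^2"] r rL by auto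
    then have "sqrt (r^2 - t^2) * sqrt (r^2 - t^2) \<le> L * sqrt (r^2 - t^2)"
      by (intro mult_right_mono) auto
    then have "r^2 - t^2 \<le> L * sqrt (r^2 - t^2)" using chord(1) by simp
    moreover have "0 \<le> L * sqrt (r^2 - t^2)" using r rL chord(1) by simp
    ultimately have "0 \<le> L * sqrt (r^2 - t^2) - (r^2 - t^2) / 2" by (simp add: field_simps)
    then show ?thesis using that rL by simp
  qed
  moreover have "F r - F 0 = L^2 * pi * r^2 / 4 - 2 * L * r^3 / 3 + r^4 / 8"
    unfolding F_def using r
    by (simp add: field_simps power2_eq_square power3_eq_cube real_sqrt_mult power4_eq_xxxx)
  ultimately show ?thesis using nn_integral_has_integral_lebesgue'[OF _ integral] by simp
qed

lemma nn_integral_disk_section: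
  fixes r L x :: real
  assumes r: "0 < r" and rL: "r \<le> L"
  shows "(\<integral>\<^sup>+y. indicator (cball 0 r) (x, y) * ennreal ((L - \<bar>x\<bar>) * (L - \<bar>y\<bar>)) \<partial>lborel)
     = 2 * (ennreal ((L - \<bar>x\<bar>) * (L * sqrt (r^2 - x^2) - (r^2 - x^2) / 2)) * indicator {-r..r} x)"
proof -
  have in_disk: "(x, y) \<in> cball 0 r \<longleftrightarrow> x^2 + y^2 \<le> r^2" for y
    using r by (simp add: norm_Pair real_sqrt_le_iff')
  show ?thesis
  proof (cases "\<bar>x\<bar> \<le> r")
    case True
    define h where "h = sqrt (r^2 - x^2)"
    have "x^2 \<le> r^2" using True r by (metis abs_le_square_iff abs_of_pos)
    moreover have "r^2 \<le> L^2" using r rL by (auto intro: power_mono)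
    ultimately have "0 \<le> r^2 - x^2" "r^2 - x^2 \<le> L^2" using zero_le_power2[of x] by linarith+
    then have h: "0 \<le> h" "h \<le> L" "h^2 = r^2 - x^2"
      unfolding h_def using real_sqrt_le_mono[of "r^2 - x^2" "L^2"] r rL by auto
    have "x^2 + y^2 \<le> r^2 \<longleftrightarrow> \<bar>y\<bar> \<le> h" for y
      unfolding h_def by (metis add.commute le_diff_eq power2_abs real_le_rsqrt sqrt_ge_absD)
    then have "indicator (cball 0 r) (x, y) = (indicator {-h..h} y :: ennreal)" for y
      unfolding indicator_def in_disk by (auto simp: abs_le_iff)
    then have "(\<integral>\<^sup>+y. indicator (cball 0 r) (x, y) * ennreal ((L - \<bar>x\<bar>) * (L - \<bar>y\<bar>)) \<partial>lborel)
        = (\<integral>\<^sup>+y. ennreal ((L - \<bar>x\<bar>) * (L - \<bar>y\<bar>)) * indicator {-h..h} y \<partial>lborel)"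
      by (simp add: mult.commute)
    also have "\<dots> = 2 * (\<integral>\<^sup>+y. ennreal ((L - \<bar>x\<bar>) * (L - \<bar>y\<bar>)) * indicator {-h..h} y * indicator {0..} y \<partial>lborel)"
      by (rule nn_integral_lborel_even) (auto simp: indicator_def)
    also have "(\<integral>\<^sup>+y. ennreal ((L - \<bar>x\<bar>) * (L - \<bar>y\<bar>)) * indicator {-h..h} y * indicator {0..} y \<partial>lborel)
        = (\<integral>\<^sup>+y. ennreal ((L - \<bar>x\<bar>) * (L - y)) * indicator {0..h} y \<partial>lborel)"
      using h by (intro nn_integral_cong) (auto simp: indicator_def)
    also have "\<dots> = ennreal ((L - \<bar>x\<bar>) * (L * h - h^2 / 2))"
      using True rL h by (intro nn_integral_linear_Icc) auto
    finally show ?thesis using True unfolding h(3) by (simp add: h_def indicator_def abs_le_iff)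
  next
    case False
    then have "x^2 > r^2" using r by (metis abs_le_square_iff abs_of_pos not_le)
    then have "(x, y) \<notin> cball 0 r" for y :: real
      unfolding in_disk using zero_le_power2[of y] by linarith
    moreover have "x \<notin> {-r..r}" using False by auto
    ultimately show ?thesis by (simp add: indicator_def)
  qed
qed

lemma nn_integral_disk_box_weight:
  fixes r L :: real
  assumes r: "0 < r" and rL: "r \<le> L"
  shows "(\<integral>\<^sup>+t. indicator (cball 0 r) t * ennreal ((L - \<bar>fst t\<bar>) * (L - \<bar>snd t\<bar>)) \<partial>lborel)
     = ennreal (pi * L^2 * r^2 - 8 * L * r^3 / 3 + r^4 / 2)"
proof -
  define Q where "Q x = ennreal ((L - \<bar>x\<bar>) * (L * sqrt (r^2 - x^2) - (r^2 - x^2) / 2)) * indicator {-r..r} x"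
    for x :: real
  have [measurable]: "Q \<in> borel_measurable borel"
    unfolding Q_def by measurable
  have "(\<lambda>t. ennreal ((L - \<bar>fst t\<bar>) * (L - \<bar>snd t\<bar>))) \<in> borel_measurable borel"
    by (intro measurable_compose[OF _ measurable_ennreal] borel_measurable_continuous_onI continuous_intros)
  then have [measurable]:
    "(\<lambda>t. indicator (cball 0 r) t * ennreal ((L - \<bar>fst t\<bar>) * (L - \<bar>snd t\<bar>))) \<in> borel_measurable borel"
    by (intro borel_measurable_times_ennreal borel_measurable_indicator) auto
  have "(\<integral>\<^sup>+t. indicator (cball 0 r) t * ennreal ((L - \<bar>fst t\<bar>) * (L - \<bar>snd t\<bar>)) \<partial>lborel)
      = (\<integral>\<^sup>+x. 2 * Q x \<partial>lborel)"
    unfolding Q_def using nn_integral_disk_section[OF r rL]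
    by (subst nn_integral_lborel_pair) auto
  also have "\<dots> = 2 * (\<integral>\<^sup>+x. Q x \<partial>lborel)"
    by (rule nn_integral_cmult) simp
  also have "(\<integral>\<^sup>+x. Q x \<partial>lborel) = 2 * (\<integral>\<^sup>+x. Q x * indicator {0..} x \<partial>lborel)"
    by (rule nn_integral_lborel_even) (auto simp: Q_def indicator_def)
  also have "(\<integral>\<^sup>+x. Q x * indicator {0..} x \<partial>lborel)
      = (\<integral>\<^sup>+t. ennreal ((L - t) * (L * sqrt (r^2 - t^2) - (r^2 - t^2) / 2)) * indicator {0..r} t \<partial>lborel)"
    by (intro nn_integral_cong) (auto simp: Q_def indicator_def)
  also have "2 * (2 * \<dots>) = ennreal (4 * (L^2 * pi * r^2 / 4 - 2 * L * r^3 / 3 + r^4 / 8))"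
    unfolding nn_integral_disk_weight[OF r rL]
    by (subst ennreal_mult') (auto simp: mult.assoc[symmetric])
  finally show ?thesis by (simp add: algebra_simps)
qed

lemma nn_integral_Icc_overlap:
  fixes L s :: real
  assumes "\<bar>s\<bar> \<le> L"
  shows "(\<integral>\<^sup>+x. indicator {-L/2..L/2} x * indicator {-L/2..L/2} (x + s) \<partial>lborel) = ennreal (L - \<bar>s\<bar>)"
proof -
  have "(\<integral>\<^sup>+x. indicator {-L/2..L/2} x * indicator {-L/2..L/2} (x + s) \<partial>lborel)
      = (\<integral>\<^sup>+x. indicator {max (-L/2) (-L/2-s) .. min (L/2) (L/2-s)} x \<partial>lborel)"
    by (intro nn_integral_cong) (auto simp: indicator_def)
  also have "\<dots> = emeasure lborel {max (-L/2) (-L/2-s) .. min (L/2) (L/2-s)}" by simp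
  also have "\<dots> = ennreal (min (L/2) (L/2-s) - max (-L/2) (-L/2-s))"
    using assms by (intro emeasure_lborel_Icc) (auto simp: abs_le_iff max_def min_def)
  also have "min (L/2) (L/2-s) - max (-L/2) (-L/2-s) = L - \<bar>s\<bar>"
    by (auto simp: min_def max_def abs_if)
  finally show ?thesis .
qed

lemma nn_integral_box_overlap:
  fixes L :: real and t :: "real \<times> real"
  assumes "\<bar>fst t\<bar> \<le> L" "\<bar>snd t\<bar> \<le> L"
  shows "(\<integral>\<^sup>+x. indicator ({-L/2..L/2} \<times> {-L/2..L/2}) x * indicator ({-L/2..L/2} \<times> {-L/2..L/2}) (x + t) \<partial>lborel)
     = ennreal ((L - \<bar>fst t\<bar>) * (L - \<bar>snd t\<bar>))"
proof -
  obtain t1 t2 where t: "t = (t1, t2)" by (cases t)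
  let ?I = "{-L/2..L/2::real}"
  have [measurable]: "?I \<times> ?I \<in> sets borel" by (auto intro!: borel_closed closed_Times)
  have m: "(\<lambda>x. indicator (?I \<times> ?I) x * indicator (?I \<times> ?I) (x + t) :: ennreal) \<in> borel_measurable borel"
    by measurable
  have "(\<integral>\<^sup>+x. indicator (?I \<times> ?I) x * indicator (?I \<times> ?I) (x + t) \<partial>lborel)
     = (\<integral>\<^sup>+x1. \<integral>\<^sup>+x2. (indicator ?I x1 * indicator ?I (x1 + t1)) * (indicator ?I x2 * indicator ?I (x2 + t2)) \<partial>lborel \<partial>lborel)"
    by (subst nn_integral_lborel_pair[OF m]) (auto simp: t indicator_def intro!: nn_integral_cong)
  also have "\<dots> = (\<integral>\<^sup>+x1. (indicator ?I x1 * indicator ?I (x1 + t1)) * \<integral>\<^sup>+x2. (indicator ?I x2 * indicator ?I (x2 + t2)) \<partial>lborel \<partial>lborel)"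
    by (intro nn_integral_cong nn_integral_cmult) auto
  also have "\<dots> = (\<integral>\<^sup>+x1. (indicator ?I x1 * indicator ?I (x1 + t1)) \<partial>lborel) * \<integral>\<^sup>+x2. (indicator ?I x2 * indicator ?I (x2 + t2)) \<partial>lborel"
    by (intro nn_integral_multc) auto
  also have "\<dots> = ennreal (L - \<bar>t1\<bar>) * ennreal (L - \<bar>t2\<bar>)"
    using assms nn_integral_Icc_overlap[of t1 L] nn_integral_Icc_overlap[of t2 L] by (simp add: t)
  finally show ?thesis using assms by (simp add: t ennreal_mult)
qed

lemma nn_integral_indicator_cball_translate:
  fixes g :: "'a::euclidean_space \<Rightarrow> ennreal"
  assumes [measurable]: "g \<in> borel_measurable borel"
  shows "(\<integral>\<^sup>+y. g y * indicator (cball x r) y \<partial>lborel) = (\<integral>\<^sup>+t. g (x + t) * indicator (cball 0 r) t \<partial>lborel)"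
proof -
  have [measurable]: "cball c r \<in> sets borel" for c :: 'a by simp
  have "(\<integral>\<^sup>+y. g y * indicator (cball x r) y \<partial>lborel)
      = (\<integral>\<^sup>+y. g y * indicator (cball x r) y \<partial>distr lborel borel ((+) x))"
    by (simp add: lborel_distr_plus)
  also have "\<dots> = (\<integral>\<^sup>+t. g (x + t) * indicator (cball x r) (x + t) \<partial>lborel)"
    by (subst nn_integral_distr) auto
  also have "\<dots> = (\<integral>\<^sup>+t. g (x + t) * indicator (cball 0 r) t \<partial>lborel)"
    by (intro nn_integral_cong) (auto simp: indicator_def dist_norm)
  finally show ?thesis .
qed

lemma nn_integral_box_pairs_within:
  fixes r L :: real
  assumes r: "0 < r" and rL: "r \<le> L"
  defines "Q \<equiv> {-L/2..L/2} \<times> {-L/2..L/2}"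
  shows "(\<integral>\<^sup>+x. \<integral>\<^sup>+y. indicator Q x * indicator Q y * indicator (cball x r) y \<partial>lborel \<partial>lborel)
     = ennreal (pi * L^2 * r^2 - 8 * L * r^3 / 3 + r^4 / 2)"
proof -
  have [measurable]: "Q \<in> sets borel" unfolding Q_def by (auto intro!: borel_closed closed_Times)
  have [measurable]: "cball 0 r \<in> sets (borel :: (real \<times> real) measure)" by simp
  have "(\<integral>\<^sup>+y. indicator Q x * indicator Q y * indicator (cball x r) y \<partial>lborel)
      = (\<integral>\<^sup>+t. indicator Q x * indicator Q (x + t) * indicator (cball 0 r) t \<partial>lborel)" for x
    using nn_integral_indicator_cball_translate[of "\<lambda>y. indicator Q x * indicator Q y" x r] by simp
  then have "(\<integral>\<^sup>+x. \<integral>\<^sup>+y. indicator Q x * indicator Q y * indicator (cball x r) y \<partial>lborel \<partial>lborel)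
      = (\<integral>\<^sup>+x. \<integral>\<^sup>+t. indicator Q x * indicator Q (x + t) * indicator (cball 0 r) t \<partial>lborel \<partial>lborel)"
    by simp
  also have "\<dots> = (\<integral>\<^sup>+t. \<integral>\<^sup>+x. indicator Q x * indicator Q (x + t) * indicator (cball 0 r) t \<partial>lborel \<partial>lborel)"
    by (rule lborel_pair.Fubini'[symmetric]) measurable
  also have "\<dots> = (\<integral>\<^sup>+t. indicator (cball 0 r) t * ennreal ((L - \<bar>fst t\<bar>) * (L - \<bar>snd t\<bar>)) \<partial>lborel)"
  proof (rule nn_integral_cong)
    fix t :: "real \<times> real"
    show "(\<integral>\<^sup>+x. indicator Q x * indicator Q (x + t) * indicator (cball 0 r) t \<partial>lborel)
        = indicator (cball 0 r) t * ennreal ((L - \<bar>fst t\<bar>) * (L - \<bar>snd t\<bar>))"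
    proof (cases "t \<in> cball 0 r")
      case True
      then have "\<bar>fst t\<bar> \<le> L" "\<bar>snd t\<bar> \<le> L"
        using rL norm_fst_le[of "fst t" "snd t"] norm_snd_le[of "snd t" "fst t"] by auto
      then show ?thesis using True nn_integral_box_overlap[of t L] by (simp add: Q_def)
    qed simp
  qed
  also have "\<dots> = ennreal (pi * L^2 * r^2 - 8 * L * r^3 / 3 + r^4 / 2)"
    by (rule nn_integral_disk_box_weight[OF r rL])
  finally show ?thesis .
qed

lemma box_pairs_within_volume_nonneg:
  fixes r L :: real
  assumes r: "0 < r" and rL: "r \<le> L"
  shows "0 \<le> pi * L^2 * r^2 - 8 * L * r^3 / 3 + r^4 / 2"
proof -
  have "8 * L * r^3 / 3 \<le> 8 / 3 * L^2 * r^2"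
    using r rL by (simp add: power2_eq_square power3_eq_cube mult_right_mono)
  also have "\<dots> \<le> pi * L^2 * r^2"
    using pi_gt3 by (intro mult_right_mono) auto
  finally show ?thesis by simp
qed

section \<open>Sums of a bounded symmetric kernel over pairs of independent samples\<close>

definition index_pairs :: "nat \<Rightarrow> (nat \<times> nat) set" where
  "index_pairs n = {(u, v). u < v \<and> v < n}"

lemma finite_index_pairs: "finite (index_pairs n)"
  by (rule finite_subset[of _ "{..<n} \<times> {..<n}"]) (auto simp: index_pairs_def)

lemma card_index_pairs: "real (card (index_pairs n)) = real n * (real n - 1) / 2"
proof (induction n)
  case (Suc n)
  have "index_pairs (Suc n) = index_pairs n \<union> (\<lambda>u. (u, n)) ` {..<n}"
    by (auto simp: index_pairs_def less_Suc_eq)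
  moreover have "index_pairs n \<inter> (\<lambda>u. (u, n)) ` {..<n} = {}"
    by (auto simp: index_pairs_def)
  ultimately have "card (index_pairs (Suc n)) = card (index_pairs n) + card ((\<lambda>u. (u, n)) ` {..<n})"
    by (simp add: card_Un_disjoint finite_index_pairs)
  also have "card ((\<lambda>u. (u, n)) ` {..<n}) = n"
    by (subst card_image) (auto simp: inj_on_def)
  finally show ?case using Suc.IH by (simp add: field_simps)
qed (simp add: index_pairs_def)

definition share_vertex :: "nat \<times> nat \<Rightarrow> nat \<times> nat \<Rightarrow> bool" where
  "share_vertex e e' \<longleftrightarrow> {fst e, snd e} \<inter> {fst e', snd e'} \<noteq> {}"

lemma card_share_vertex_le:
  assumes "e \<in> index_pairs n"
  shows "card {e' \<in> index_pairs n. share_vertex e e'} \<le> 2 * n"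
proof -
  define pair_with where "pair_with a x = (if x < a then (x, a) else (a, x))" for a x :: nat
  have covered: "{e' \<in> index_pairs n. share_vertex e e'} \<subseteq> pair_with (fst e) ` {..<n} \<union> pair_with (snd e) ` {..<n}"
  proof
    fix e' assume "e' \<in> {e' \<in> index_pairs n. share_vertex e e'}"
    then obtain w z where "e' = (w, z)" "w < z" "z < n" "fst e \<in> {w, z} \<or> snd e \<in> {w, z}"
      by (auto simp: index_pairs_def share_vertex_def)
    moreover have "pair_with w z = (w, z)" "pair_with z w = (w, z)" "w < n"
      using \<open>w < z\<close> \<open>z < n\<close> by (auto simp: pair_with_def)
    ultimately show "e' \<in> pair_with (fst e) ` {..<n} \<union> pair_with (snd e) ` {..<n}"
      by (metis UnI1 UnI2 empty_iff insertE lessThan_iff rev_image_eqI)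
  qed
  have "card {e' \<in> index_pairs n. share_vertex e e'}
      \<le> card (pair_with (fst e) ` {..<n}) + card (pair_with (snd e) ` {..<n})"
    by (rule order_trans[OF card_mono[OF _ covered] card_Un_le]) simp
  also have "\<dots> \<le> n + n"
    using card_image_le[of "{..<n}"] by (intro add_mono) auto
  finally show ?thesis by simp
qed

lemma sum_share_vertex_weights_le:
  fixes p V :: real
  assumes "e \<in> index_pairs n" and "0 \<le> V"
  shows "(\<Sum>e'\<in>index_pairs n. (if e = e' then p else 0) + (if share_vertex e e' then V else 0))
    \<le> p + 2 * real n * V"
proof -
  have "(\<Sum>e'\<in>index_pairs n. (if e = e' then p else 0) + (if share_vertex e e' then V else 0))
      = p + real (card {e' \<in> index_pairs n. share_vertex e e'}) * V"
    using assms(1) by (simp add: sum.distrib finite_index_pairs sum.inter_filter[symmetric])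
  also have "\<dots> \<le> p + 2 * real n * V"
    using card_share_vertex_le[OF assms(1)] assms(2) by (intro add_left_mono mult_right_mono) auto
  finally show ?thesis .
qed

definition pair_sum :: "('a \<Rightarrow> 'a \<Rightarrow> real) \<Rightarrow> nat \<Rightarrow> (nat \<Rightarrow> 'a) \<Rightarrow> real" where
  "pair_sum f n X = (\<Sum>(u, v) \<in> index_pairs n. f (X u) (X v))"

context prob_space
begin

lemma integral_PiM_remove_coordinate:
  fixes g :: "('i \<Rightarrow> 'a) \<Rightarrow> real"
  assumes K: "finite K" "i \<in> K" and g: "g \<in> borel_measurable (PiM K (\<lambda>_. M))"
    and bounded: "\<And>X. \<bar>g X\<bar> \<le> B"
  shows "(\<integral>X. g X \<partial>PiM K (\<lambda>_. M)) = (\<integral>X. (\<integral>y. g (X(i := y)) \<partial>M) \<partial>PiM (K - {i}) (\<lambda>_. M))"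
proof -
  interpret product_sigma_finite "\<lambda>_::'i. M" by unfold_locales
  interpret P: prob_space "PiM K (\<lambda>_. M)" by (intro prob_space_PiM prob_space_axioms)
  have K_eq: "insert i (K - {i}) = K" using K by auto
  have "integrable (PiM (insert i (K - {i})) (\<lambda>_. M)) g"
    unfolding K_eq using g bounded by (intro P.integrable_const_bound[of _ B]) auto
  from product_integral_insert[OF _ _ this] K show ?thesis
    by (simp only: K_eq) simp
qed

lemma integral_PiM_coordinate:
  fixes \<phi> :: "'a \<Rightarrow> real"
  assumes K: "finite K" "i \<in> K" and [measurable]: "\<phi> \<in> borel_measurable M"
    and bounded: "\<And>x. \<bar>\<phi> x\<bar> \<le> B"
  shows "(\<integral>X. \<phi> (X i) \<partial>PiM K (\<lambda>_. M)) = (\<integral>x. \<phi> x \<partial>M)"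
proof -
  interpret P: prob_space "PiM (K - {i}) (\<lambda>_. M)" by (intro prob_space_PiM prob_space_axioms)
  have "(\<integral>X. \<phi> (X i) \<partial>PiM K (\<lambda>_. M)) = (\<integral>X. (\<integral>y. \<phi> y \<partial>M) \<partial>PiM (K - {i}) (\<lambda>_. M))"
    using K bounded by (subst integral_PiM_remove_coordinate[of K i]) auto
  then show ?thesis by (simp add: P.prob_space)
qed

end

locale symmetric_kernel = prob_space M for M :: "'a measure" +
  fixes f :: "'a \<Rightarrow> 'a \<Rightarrow> real"
  assumes measurable_kernel: "case_prod f \<in> borel_measurable (M \<Otimes>\<^sub>M M)"
    and kernel_commute: "f x y = f y x"
    and kernel_nonneg: "0 \<le> f x y"
    and kernel_le_1: "f x y \<le> 1"
begin

lemma measurable_kernel_comp[measurable (raw)]: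
  assumes "g \<in> N \<rightarrow>\<^sub>M M" "h \<in> N \<rightarrow>\<^sub>M M"
  shows "(\<lambda>x. f (g x) (h x)) \<in> borel_measurable N"
  using measurable_compose[OF measurable_Pair[OF assms] measurable_kernel] by simp

definition kernel_degree :: "'a \<Rightarrow> real" where
  "kernel_degree x = (\<integral>y. f x y \<partial>M)"

definition kernel_mean :: real where
  "kernel_mean = (\<integral>x. kernel_degree x \<partial>M)"

definition kernel_degree_variance :: real where
  "kernel_degree_variance = (\<integral>x. (kernel_degree x - kernel_mean)^2 \<partial>M)"

lemma measurable_kernel_degree[measurable]: "kernel_degree \<in> borel_measurable M"
  unfolding kernel_degree_def[abs_def] by measurable

lemma kernel_degree_nonneg: "0 \<le> kernel_degree x"
  unfolding kernel_degree_def by (simp add: kernel_nonneg)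

lemma kernel_degree_le_1: "kernel_degree x \<le> 1"
proof (cases "integrable M (f x)")
  case True
  then have "kernel_degree x \<le> (\<integral>y. 1 \<partial>M)"
    unfolding kernel_degree_def by (intro integral_mono) (auto simp: kernel_le_1)
  then show ?thesis by (simp add: prob_space)
qed (simp add: kernel_degree_def not_integrable_integral_eq)

lemma kernel_mean_nonneg: "0 \<le> kernel_mean"
  unfolding kernel_mean_def by (simp add: kernel_degree_nonneg)

lemma kernel_mean_le:
  assumes "\<And>x. kernel_degree x \<le> c"
  shows "kernel_mean \<le> c"
proof -
  have "integrable M kernel_degree"
    using kernel_degree_nonneg kernel_degree_le_1 by (intro integrable_const_bound[of _ 1]) auto
  then have "kernel_mean \<le> (\<integral>x. c \<partial>M)"
    unfolding kernel_mean_def using assms by (intro integral_mono) auto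
  then show ?thesis by (simp add: prob_space)
qed

lemma kernel_mean_le_1: "kernel_mean \<le> 1"
  by (rule kernel_mean_le) (rule kernel_degree_le_1)

lemma kernel_degree_variance_nonneg: "0 \<le> kernel_degree_variance"
  unfolding kernel_degree_variance_def by simp

lemma abs_kernel_centered_le_1: "\<bar>f x y - kernel_mean\<bar> \<le> 1"
  using kernel_nonneg[of x y] kernel_le_1[of x y] kernel_mean_nonneg kernel_mean_le_1 by linarith

lemma abs_kernel_degree_centered_le_1: "\<bar>kernel_degree x - kernel_mean\<bar> \<le> 1"
  using kernel_degree_nonneg[of x] kernel_degree_le_1[of x] kernel_mean_nonneg kernel_mean_le_1
  by linarith

lemma integral_kernel_centered_mult:
  assumes "x \<in> space M"
  shows "(\<integral>y. (f x y - kernel_mean) * c \<partial>M) = (kernel_degree x - kernel_mean) * c"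
proof -
  have "integrable M (f x)"
    using assms kernel_nonneg kernel_le_1 by (intro integrable_const_bound[of _ 1]) auto
  then show ?thesis by (simp add: kernel_degree_def prob_space)
qed

lemma prob_space_PiM_samples: "prob_space (PiM K (\<lambda>_. M))"
  by (intro prob_space_PiM prob_space_axioms)

lemma integral_kernel_pair:
  assumes K: "finite K" "u \<in> K" "v \<in> K" and "u \<noteq> v"
  shows "(\<integral>X. f (X u) (X v) \<partial>PiM K (\<lambda>_. M)) = kernel_mean"
proof -
  have "(\<integral>X. f (X u) (X v) \<partial>PiM K (\<lambda>_. M))
      = (\<integral>X. (\<integral>y. f ((X(v := y)) u) ((X(v := y)) v) \<partial>M) \<partial>PiM (K - {v}) (\<lambda>_. M))"
    using K kernel_nonneg kernel_le_1
    by (intro integral_PiM_remove_coordinate[where B = 1]) (auto simp: abs_le_iff)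
  also have "\<dots> = (\<integral>X. kernel_degree (X u) \<partial>PiM (K - {v}) (\<lambda>_. M))"
    using \<open>u \<noteq> v\<close> by (simp add: kernel_degree_def)
  also have "\<dots> = kernel_mean"
    unfolding kernel_mean_def using K \<open>u \<noteq> v\<close> kernel_degree_nonneg kernel_degree_le_1
    by (intro integral_PiM_coordinate[where B = 1]) (auto simp: abs_le_iff)
  finally show ?thesis .
qed

lemma integral_kernel_pair_centered_sq_le:
  assumes K: "finite K" "u \<in> K" "v \<in> K" and "u \<noteq> v"
  shows "(\<integral>X. (f (X u) (X v) - kernel_mean)^2 \<partial>PiM K (\<lambda>_. M)) \<le> kernel_mean"
proof -
  interpret P: prob_space "PiM K (\<lambda>_. M)" by (rule prob_space_PiM_samples)
  let ?p = kernel_mean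
  have integrable: "integrable (PiM K (\<lambda>_. M)) (\<lambda>X. f (X u) (X v))"
    using K kernel_nonneg kernel_le_1 by (intro P.integrable_const_bound[of _ 1]) auto
  have "(f x y - ?p)^2 \<le> f x y * (1 - 2 * ?p) + ?p^2" for x y
  proof -
    have "f x y * f x y \<le> f x y * 1" using kernel_nonneg kernel_le_1 by (intro mult_left_mono)
    then show ?thesis by (simp add: power2_eq_square algebra_simps)
  qed
  then have "(\<integral>X. (f (X u) (X v) - ?p)^2 \<partial>PiM K (\<lambda>_. M))
      \<le> (\<integral>X. f (X u) (X v) * (1 - 2 * ?p) + ?p^2 \<partial>PiM K (\<lambda>_. M))"
    using K abs_kernel_centered_le_1 integrable
    by (intro integral_mono) (auto intro!: P.integrable_const_bound[of _ 1] simp: abs_square_le_1)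
  also have "\<dots> = ?p * (1 - 2 * ?p) + ?p^2"
    using integrable integral_kernel_pair[OF assms] by (simp add: P.prob_space)
  also have "\<dots> \<le> ?p" by (simp add: power2_eq_square algebra_simps)
  finally show ?thesis .
qed

lemma integral_kernel_pair_centered_eliminate_vertex:
  assumes K: "finite K" "u \<in> K" "v \<in> K" "w \<in> K" "z \<in> K" and "w \<noteq> z" "z \<notin> {u, v}"
  shows "(\<integral>X. (f (X u) (X v) - kernel_mean) * (f (X w) (X z) - kernel_mean) \<partial>PiM K (\<lambda>_. M))
    = (\<integral>X. (f (X u) (X v) - kernel_mean) * (kernel_degree (X w) - kernel_mean) \<partial>PiM (K - {z}) (\<lambda>_. M))"
proof -
  let ?p = kernel_mean and ?Y = "\<lambda>X. f (X u) (X v) - kernel_mean"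
  have "\<bar>?Y X * (f a b - ?p)\<bar> \<le> 1" for X a b
    using abs_kernel_centered_le_1[of "X u" "X v"] abs_kernel_centered_le_1[of a b]
    by (simp add: abs_mult mult_le_one)
  then have "(\<integral>X. ?Y X * (f (X w) (X z) - ?p) \<partial>PiM K (\<lambda>_. M))
      = (\<integral>X. (\<integral>y. ?Y (X(z := y)) * (f ((X(z := y)) w) y - ?p) \<partial>M) \<partial>PiM (K - {z}) (\<lambda>_. M))"
    using K by (subst integral_PiM_remove_coordinate[where B = 1 and i = z]) auto
  also have "\<dots> = (\<integral>X. ?Y X * (kernel_degree (X w) - ?p) \<partial>PiM (K - {z}) (\<lambda>_. M))"
  proof (intro Bochner_Integration.integral_cong refl)
    fix X assume "X \<in> space (PiM (K - {z}) (\<lambda>_. M))"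
    then have "X w \<in> space M" using K \<open>w \<noteq> z\<close> by (auto simp: space_PiM)
    have "(\<integral>y. ?Y (X(z := y)) * (f ((X(z := y)) w) y - ?p) \<partial>M) = (\<integral>y. (f (X w) y - ?p) * ?Y X \<partial>M)"
      using \<open>w \<noteq> z\<close> \<open>z \<notin> {u, v}\<close> by (auto simp: mult.commute intro!: Bochner_Integration.integral_cong)
    also have "\<dots> = (kernel_degree (X w) - ?p) * ?Y X"
      using \<open>X w \<in> space M\<close> by (rule integral_kernel_centered_mult)
    finally show "(\<integral>y. ?Y (X(z := y)) * (f ((X(z := y)) w) y - ?p) \<partial>M) = ?Y X * (kernel_degree (X w) - ?p)"
      by (simp add: mult.commute)
  qed
  finally show ?thesis .
qed

lemma integral_kernel_pair_centered_degree_uncorrelated: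
  assumes K: "finite K" "u \<in> K" "v \<in> K" "w \<in> K" and "w \<notin> {u, v}"
  shows "(\<integral>X. (f (X u) (X v) - kernel_mean) * (kernel_degree (X w) - kernel_mean) \<partial>PiM K (\<lambda>_. M)) = 0"
proof -
  let ?p = kernel_mean
  have "integrable M kernel_degree"
    using kernel_degree_nonneg kernel_degree_le_1 by (intro integrable_const_bound[of _ 1]) auto
  then have centered: "(\<integral>y. kernel_degree y - ?p \<partial>M) = 0"
    by (simp add: kernel_mean_def prob_space)
  have "\<bar>(f a b - ?p) * (kernel_degree x - ?p)\<bar> \<le> 1" for a b x
    using abs_kernel_centered_le_1[of a b] abs_kernel_degree_centered_le_1[of x]
    by (simp add: abs_mult mult_le_one)
  then have "(\<integral>X. (f (X u) (X v) - ?p) * (kernel_degree (X w) - ?p) \<partial>PiM K (\<lambda>_. M))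
      = (\<integral>X. (\<integral>y. (f (X u) (X v) - ?p) * (kernel_degree y - ?p) \<partial>M) \<partial>PiM (K - {w}) (\<lambda>_. M))"
    using K \<open>w \<notin> {u, v}\<close>
    by (subst integral_PiM_remove_coordinate[where B = 1 and i = w]) (auto simp: eq_commute[of w])
  also have "\<dots> = 0"
    using centered by simp
  finally show ?thesis .
qed

lemma integral_kernel_pair_centered_degree:
  assumes K: "finite K" "w \<in> K" "m \<in> K" and "w \<noteq> m"
  shows "(\<integral>X. (f (X w) (X m) - kernel_mean) * (kernel_degree (X w) - kernel_mean) \<partial>PiM K (\<lambda>_. M))
    = kernel_degree_variance"
proof -
  let ?p = kernel_mean
  have "\<bar>(f a b - ?p) * (kernel_degree x - ?p)\<bar> \<le> 1" for a b x
    using abs_kernel_centered_le_1[of a b] abs_kernel_degree_centered_le_1[of x]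
    by (simp add: abs_mult mult_le_one)
  then have "(\<integral>X. (f (X w) (X m) - ?p) * (kernel_degree (X w) - ?p) \<partial>PiM K (\<lambda>_. M))
      = (\<integral>X. (\<integral>y. (f (X w) y - ?p) * (kernel_degree (X w) - ?p) \<partial>M) \<partial>PiM (K - {m}) (\<lambda>_. M))"
    using K \<open>w \<noteq> m\<close> by (subst integral_PiM_remove_coordinate[where B = 1 and i = m]) auto
  also have "\<dots> = (\<integral>X. (kernel_degree (X w) - ?p)^2 \<partial>PiM (K - {m}) (\<lambda>_. M))"
  proof (intro Bochner_Integration.integral_cong refl)
    fix X assume "X \<in> space (PiM (K - {m}) (\<lambda>_. M))"
    then have "X w \<in> space M" using K \<open>w \<noteq> m\<close> by (auto simp: space_PiM)
    then show "(\<integral>y. (f (X w) y - ?p) * (kernel_degree (X w) - ?p) \<partial>M) = (kernel_degree (X w) - ?p)^2"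
      unfolding power2_eq_square by (rule integral_kernel_centered_mult)
  qed
  also have "\<dots> = kernel_degree_variance"
    unfolding kernel_degree_variance_def using K \<open>w \<noteq> m\<close> abs_kernel_degree_centered_le_1
    by (intro integral_PiM_coordinate[where B = 1]) (auto simp: abs_square_le_1)
  finally show ?thesis .
qed

lemma integral_kernel_pairs_centered_disjoint_vertex:
  assumes K: "finite K" "u \<in> K" "v \<in> K" "w \<in> K" "z \<in> K"
    and "u \<noteq> v" "w \<noteq> z" "z \<notin> {u, v}"
  shows "(\<integral>X. (f (X u) (X v) - kernel_mean) * (f (X w) (X z) - kernel_mean) \<partial>PiM K (\<lambda>_. M))
    = (if w \<in> {u, v} then kernel_degree_variance else 0)"
proof (cases "w \<in> {u, v}")
  case False
  then show ?thesis
    using K \<open>w \<noteq> z\<close> \<open>z \<notin> {u, v}\<close> integral_kernel_pair_centered_degree_uncorrelated[of "K - {z}" u v w]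
    by (auto simp: integral_kernel_pair_centered_eliminate_vertex)
next
  case True
  define m where "m = (if w = u then v else u)"
  have m: "m \<in> K - {z}" "w \<noteq> m" "f (X u) (X v) = f (X w) (X m)" for X
    using K True \<open>u \<noteq> v\<close> \<open>z \<notin> {u, v}\<close> by (auto simp: m_def kernel_commute)
  then have "(\<integral>X. (f (X u) (X v) - kernel_mean) * (f (X w) (X z) - kernel_mean) \<partial>PiM K (\<lambda>_. M))
      = (\<integral>X. (f (X w) (X m) - kernel_mean) * (f (X w) (X z) - kernel_mean) \<partial>PiM K (\<lambda>_. M))"
    by simp
  also have "\<dots> = (\<integral>X. (f (X w) (X m) - kernel_mean) * (kernel_degree (X w) - kernel_mean) \<partial>PiM (K - {z}) (\<lambda>_. M))"
    using K m(1) \<open>w \<noteq> z\<close> by (intro integral_kernel_pair_centered_eliminate_vertex) auto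
  also have "\<dots> = kernel_degree_variance"
    using K m(1,2) \<open>w \<noteq> z\<close> by (intro integral_kernel_pair_centered_degree) auto
  finally show ?thesis using True by simp
qed

lemma integral_kernel_pairs_centered_le:
  assumes K: "finite K" "u \<in> K" "v \<in> K" "w \<in> K" "z \<in> K" and "u \<noteq> v" "w \<noteq> z"
  shows "(\<integral>X. (f (X u) (X v) - kernel_mean) * (f (X w) (X z) - kernel_mean) \<partial>PiM K (\<lambda>_. M))
    \<le> (if {u, v} = {w, z} then kernel_mean else 0)
      + (if {u, v} \<inter> {w, z} \<noteq> {} then kernel_degree_variance else 0)"
proof (cases "{u, v} = {w, z}")
  case True
  then have "(f (X u) (X v) - kernel_mean) * (f (X w) (X z) - kernel_mean) = (f (X u) (X v) - kernel_mean)^2"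
    for X by (auto simp: doubleton_eq_iff kernel_commute power2_eq_square)
  then show ?thesis
    using integral_kernel_pair_centered_sq_le[OF K(1-3) \<open>u \<noteq> v\<close>] True kernel_degree_variance_nonneg
    by simp
next
  case False
  then consider "z \<notin> {u, v}" | "w \<notin> {u, v}"
    using \<open>u \<noteq> v\<close> \<open>w \<noteq> z\<close> by auto
  then show ?thesis
  proof cases
    case 1
    then show ?thesis
      using integral_kernel_pairs_centered_disjoint_vertex[OF K \<open>u \<noteq> v\<close> \<open>w \<noteq> z\<close>] False
        kernel_degree_variance_nonneg by auto
  next
    case 2
    then show ?thesis
      using integral_kernel_pairs_centered_disjoint_vertex[OF K(1-3,5,4) \<open>u \<noteq> v\<close> \<open>w \<noteq> z\<close>[symmetric]]
        False kernel_degree_variance_nonneg by (auto simp: kernel_commute[of "X z" "X w" for X])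
  qed
qed

lemma integral_pair_sum:
  "(\<integral>X. pair_sum f n X \<partial>PiM {..<n} (\<lambda>_. M)) = real (card (index_pairs n)) * kernel_mean"
proof -
  interpret P: prob_space "PiM {..<n} (\<lambda>_. M)" by (rule prob_space_PiM_samples)
  have "(\<integral>X. pair_sum f n X \<partial>PiM {..<n} (\<lambda>_. M))
      = (\<Sum>(u, v) \<in> index_pairs n. \<integral>X. f (X u) (X v) \<partial>PiM {..<n} (\<lambda>_. M))"
    unfolding pair_sum_def case_prod_beta using kernel_nonneg kernel_le_1
    by (intro Bochner_Integration.integral_sum P.integrable_const_bound[of _ 1])
      (auto simp: index_pairs_def)
  also have "\<dots> = (\<Sum>e \<in> index_pairs n. kernel_mean)"
    by (intro sum.cong refl) (auto simp: index_pairs_def integral_kernel_pair)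
  finally show ?thesis by simp
qed

lemma variance_pair_sum_le:
  "(\<integral>X. (pair_sum f n X - (\<integral>Y. pair_sum f n Y \<partial>PiM {..<n} (\<lambda>_. M)))^2 \<partial>PiM {..<n} (\<lambda>_. M))
    \<le> real (card (index_pairs n)) * (kernel_mean + 2 * real n * kernel_degree_variance)"
proof -
  interpret P: prob_space "PiM {..<n} (\<lambda>_. M)" by (rule prob_space_PiM_samples)
  let ?I = "index_pairs n" and ?p = kernel_mean and ?V = kernel_degree_variance
  let ?Y = "\<lambda>e X. f (X (fst e)) (X (snd e)) - ?p"
  have integrable: "integrable (PiM {..<n} (\<lambda>_. M)) (\<lambda>X. ?Y e X * ?Y e' X)" if "e \<in> ?I" "e' \<in> ?I" for e e'
    using that abs_kernel_centered_le_1
    by (intro P.integrable_const_bound[of _ 1]) (auto simp: index_pairs_def abs_mult mult_le_one)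
  have "pair_sum f n X - real (card ?I) * ?p = (\<Sum>e\<in>?I. ?Y e X)" for X
    by (simp add: pair_sum_def case_prod_beta sum_subtractf)
  then have "(\<integral>X. (pair_sum f n X - (\<integral>Y. pair_sum f n Y \<partial>PiM {..<n} (\<lambda>_. M)))^2 \<partial>PiM {..<n} (\<lambda>_. M))
      = (\<integral>X. (\<Sum>e\<in>?I. \<Sum>e'\<in>?I. ?Y e X * ?Y e' X) \<partial>PiM {..<n} (\<lambda>_. M))"
    by (simp add: integral_pair_sum power2_eq_square sum_product)
  also have "\<dots> = (\<Sum>e\<in>?I. \<Sum>e'\<in>?I. \<integral>X. ?Y e X * ?Y e' X \<partial>PiM {..<n} (\<lambda>_. M))"
    using integrable by (simp add: Bochner_Integration.integral_sum Bochner_Integration.integrable_sum)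
  also have "\<dots> \<le> (\<Sum>e\<in>?I. \<Sum>e'\<in>?I. (if e = e' then ?p else 0) + (if share_vertex e e' then ?V else 0))"
  proof (intro sum_mono)
    fix e e' assume e: "e \<in> ?I" and e': "e' \<in> ?I"
    then have "{fst e, snd e} = {fst e', snd e'} \<longleftrightarrow> e = e'"
      by (auto simp: index_pairs_def doubleton_eq_iff prod_eq_iff)
    moreover have "(\<integral>X. ?Y e X * ?Y e' X \<partial>PiM {..<n} (\<lambda>_. M))
        \<le> (if {fst e, snd e} = {fst e', snd e'} then ?p else 0)
          + (if {fst e, snd e} \<inter> {fst e', snd e'} \<noteq> {} then ?V else 0)"
      using e e' by (intro integral_kernel_pairs_centered_le) (auto simp: index_pairs_def)
    ultimately show "(\<integral>X. ?Y e X * ?Y e' X \<partial>PiM {..<n} (\<lambda>_. M))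
        \<le> (if e = e' then ?p else 0) + (if share_vertex e e' then ?V else 0)"
      by (simp add: share_vertex_def)
  qed
  also have "\<dots> \<le> (\<Sum>e\<in>?I. ?p + 2 * real n * ?V)"
    using kernel_degree_variance_nonneg by (intro sum_mono sum_share_vertex_weights_le)
  finally show ?thesis by simp
qed

lemma integrable_kernel_degree_square_diff: "integrable M (\<lambda>x. (kernel_degree x - q)^2)"
proof -
  have "\<bar>kernel_degree x - q\<bar> \<le> 1 + \<bar>q\<bar>" for x
    using kernel_degree_nonneg[of x] kernel_degree_le_1[of x] by linarith
  then have "\<bar>(kernel_degree x - q)^2\<bar> \<le> (1 + \<bar>q\<bar>)^2" for x
    by (simp add: power2_le_iff_abs_le)
  then show ?thesis by (intro integrable_const_bound[of _ "(1 + \<bar>q\<bar>)^2"]) auto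
qed

lemma kernel_degree_variance_le_integral_square_diff:
  "kernel_degree_variance \<le> (\<integral>x. (kernel_degree x - c)^2 \<partial>M)"
proof -
  let ?p = kernel_mean
  have "integrable M kernel_degree"
    using kernel_degree_nonneg kernel_degree_le_1 by (intro integrable_const_bound[of _ 1]) auto
  have "(\<integral>x. (kernel_degree x - c)^2 \<partial>M) - kernel_degree_variance
      = (\<integral>x. (kernel_degree x - c)^2 - (kernel_degree x - ?p)^2 \<partial>M)"
    unfolding kernel_degree_variance_def using integrable_kernel_degree_square_diff by simp
  also have "\<dots> = (\<integral>x. 2 * (?p - c) * kernel_degree x + (c^2 - ?p^2) \<partial>M)"
    by (intro Bochner_Integration.integral_cong) (auto simp: power2_eq_square algebra_simps)
  also have "\<dots> = (?p - c)^2"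
    using \<open>integrable M kernel_degree\<close>
    by (simp add: kernel_mean_def[symmetric] prob_space power2_eq_square algebra_simps)
  finally show ?thesis
    using zero_le_power2[of "?p - c"] by linarith
qed

lemma kernel_degree_variance_le:
  assumes le: "\<And>x. kernel_degree x \<le> c" and B: "B \<in> sets M" and eq: "\<And>x. x \<in> B \<Longrightarrow> kernel_degree x = c"
  shows "kernel_degree_variance \<le> c^2 * prob (space M - B)"
proof -
  have "kernel_degree_variance \<le> (\<integral>x. (kernel_degree x - c)^2 \<partial>M)"
    by (rule kernel_degree_variance_le_integral_square_diff)
  also have "\<dots> \<le> (\<integral>x. c^2 * indicator (space M - B) x \<partial>M)"
  proof (intro integral_mono integrable_kernel_degree_square_diff)
    show "integrable M (\<lambda>x. c^2 * indicator (space M - B) x)"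
      using B by (intro integrable_real_mult_indicator) auto
  next
    fix x assume "x \<in> space M"
    show "(kernel_degree x - c)^2 \<le> c^2 * indicator (space M - B) x"
    proof (cases "x \<in> B")
      case False
      have "(kernel_degree x - c)^2 = (c - kernel_degree x)^2" by (rule power2_commute)
      also have "\<dots> \<le> c^2" using kernel_degree_nonneg[of x] le[of x] by (intro power_mono) auto
      finally show ?thesis using False \<open>x \<in> space M\<close> by simp
    qed (simp add: eq)
  qed
  also have "\<dots> = c^2 * prob (space M - B)"
    using B by simp
  finally show ?thesis .
qed

end

section \<open>The random geometric graph on the square\<close>

definition cball_indicator :: "real \<Rightarrow> 'a::metric_space \<Rightarrow> 'a \<Rightarrow> real" where
  "cball_indicator r x y = indicator (cball x r) y"

lemma num_edges_eq_pair_sum: "num_edges n r X = pair_sum (cball_indicator r) n X"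
proof -
  have "pair_sum (cball_indicator r) n X = real (card {e \<in> index_pairs n. dist (X (fst e)) (X (snd e)) \<le> r})"
    unfolding pair_sum_def case_prod_beta cball_indicator_def
    by (simp add: sum.If_cases Int_def finite_index_pairs indicator_def dist_commute)
  also have "{e \<in> index_pairs n. dist (X (fst e)) (X (snd e)) \<le> r} = {(u, v). u < v \<and> v < n \<and> dist (X u) (X v) \<le> r}"
    by (auto simp: index_pairs_def)
  finally show ?thesis by (simp add: num_edges_def)
qed

lemma pred_mem_cball[measurable]:
  "Measurable.pred (borel \<Otimes>\<^sub>M borel) (\<lambda>z::'a::{metric_space, second_countable_topology} \<times> 'a. snd z \<in> cball (fst z) r)"
proof -
  have "{z :: 'a \<times> 'a. dist (fst z) (snd z) \<le> r} \<in> sets (borel \<Otimes>\<^sub>M borel)"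
    unfolding borel_prod by (intro borel_closed closed_Collect_le continuous_intros)
  then show ?thesis by (simp add: pred_def)
qed

lemma measurable_cball_indicator:
  "case_prod (cball_indicator r) \<in> borel_measurable (borel \<Otimes>\<^sub>M borel :: ('a::{metric_space, second_countable_topology} \<times> 'a) measure)"
  unfolding cball_indicator_def case_prod_beta indicator_def by measurable

lemma sets_square[measurable]: "square n \<in> sets borel"
  unfolding square_def by (auto intro!: borel_closed closed_Times)

lemma emeasure_lborel_square_box:
  fixes a b :: real
  assumes "a \<le> b"
  shows "emeasure lborel ({a..b} \<times> {a..b}) = ennreal ((b - a)^2)"
proof -
  have "emeasure lborel ({a..b} \<times> {a..b}) = emeasure lborel {a..b} * emeasure lborel {a..b}"
    by (simp add: lborel_prod[symmetric] lborel.emeasure_pair_measure_Times)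
  then show ?thesis using assms by (simp add: ennreal_mult[symmetric] power2_eq_square)
qed

lemma emeasure_square: "emeasure lborel (square n) = real n"
  unfolding square_def by (subst emeasure_lborel_square_box) auto

lemma prob_space_uniform_square: "0 < n \<Longrightarrow> prob_space (uniform_measure lborel (square n))"
  by (intro prob_space_uniform_measure) (simp_all add: emeasure_square)

lemma symmetric_kernel_cball_indicator:
  assumes "0 < n"
  shows "symmetric_kernel (uniform_measure lborel (square n)) (cball_indicator r)"
proof (intro symmetric_kernel.intro symmetric_kernel_axioms.intro)
  let ?M = "uniform_measure lborel (square n)"
  show "prob_space ?M" using assms by (rule prob_space_uniform_square)
  have "sets (?M \<Otimes>\<^sub>M ?M) = sets (borel \<Otimes>\<^sub>M borel)"
    by (rule sets_pair_measure_cong) simp_all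
  then show "case_prod (cball_indicator r) \<in> borel_measurable (?M \<Otimes>\<^sub>M ?M)"
    using measurable_cball_indicator by (subst measurable_cong_sets[OF \<open>sets (?M \<Otimes>\<^sub>M ?M) = _\<close> refl])
qed (auto simp: cball_indicator_def indicator_def dist_commute)

definition inner_square :: "nat \<Rightarrow> real \<Rightarrow> (real \<times> real) set" where
  "inner_square n r = {- sqrt n / 2 + r .. sqrt n / 2 - r} \<times> {- sqrt n / 2 + r .. sqrt n / 2 - r}"

lemma sets_inner_square[measurable]: "inner_square n r \<in> sets borel"
  unfolding inner_square_def by (auto intro!: borel_closed closed_Times)

lemma cball_subset_square:
  assumes "x \<in> inner_square n r"
  shows "cball x r \<subseteq> square n"
proof
  fix y assume "y \<in> cball x r"
  then have "dist (fst x) (fst y) \<le> r" "dist (snd x) (snd y) \<le> r"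
    using dist_fst_le[of x y] dist_snd_le[of x y] by auto
  then show "y \<in> square n"
    using assms unfolding inner_square_def square_def
    by (cases x, cases y) (auto simp: dist_real_def abs_le_iff)
qed

context
  fixes n :: nat and r :: real
  assumes n: "0 < n" and r: "0 < r"
begin

interpretation K: symmetric_kernel "uniform_measure lborel (square n)" "cball_indicator r"
  using n by (rule symmetric_kernel_cball_indicator)

lemma kernel_degree_uniform_square:
  "ennreal (K.kernel_degree x) = emeasure lborel (square n \<inter> cball x r) / real n"
proof -
  have "K.kernel_degree x = measure (uniform_measure lborel (square n)) (cball x r)"
    by (simp add: K.kernel_degree_def cball_indicator_def)
  then show ?thesis
    by (simp add: K.emeasure_eq_measure[symmetric] emeasure_square)
qed

lemma kernel_degree_uniform_square_le: "K.kernel_degree x \<le> pi * r^2 / n"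
proof -
  have "ennreal (K.kernel_degree x) \<le> emeasure lborel (cball x r) / real n"
    unfolding kernel_degree_uniform_square by (intro divide_right_mono_ennreal emeasure_mono) auto
  also have "\<dots> = ennreal (pi * r^2 / n)"
    using emeasure_cball[of r x] r n by (simp add: unit_ball_vol_2 power2_eq_square divide_ennreal)
  finally show ?thesis by (simp add: K.kernel_degree_nonneg)
qed

lemma kernel_degree_uniform_square_eq:
  assumes "cball x r \<subseteq> square n"
  shows "K.kernel_degree x = pi * r^2 / n"
proof -
  have "ennreal (K.kernel_degree x) = emeasure lborel (cball x r) / real n"
    unfolding kernel_degree_uniform_square using assms by (simp add: Int_absorb1)
  also have "\<dots> = ennreal (pi * r^2 / n)"
    using emeasure_cball[of r x] r n by (simp add: unit_ball_vol_2 power2_eq_square divide_ennreal)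
  finally show ?thesis by (simp add: K.kernel_degree_nonneg)
qed

lemma prob_outside_inner_square_le:
  "K.prob (UNIV - inner_square n r) \<le> 4 * r / sqrt n"
proof (cases "2 * r \<le> sqrt n")
  case True
  have "inner_square n r \<subseteq> square n"
    using r unfolding inner_square_def square_def by auto
  then have "ennreal (K.prob (inner_square n r)) = emeasure lborel (inner_square n r) / real n"
    by (simp add: K.emeasure_eq_measure[symmetric] emeasure_square Int_absorb1)
  also have "\<dots> = ennreal ((sqrt n - 2 * r)^2 / n)"
    using True n unfolding inner_square_def
    by (subst emeasure_lborel_square_box) (auto simp: divide_ennreal)
  finally have "K.prob (inner_square n r) = (sqrt n - 2 * r)^2 / n"
    by (simp add: ennreal_inj)
  then have "K.prob (UNIV - inner_square n r) = 1 - (sqrt n - 2 * r)^2 / n"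
    using K.prob_compl[of "inner_square n r"] by simp
  also have "\<dots> = (4 * r * sqrt n - 4 * r^2) / n"
    using n by (simp add: field_simps power2_eq_square)
  also have "\<dots> \<le> 4 * r * sqrt n / n"
    using r by (intro divide_right_mono) auto
  also have "\<dots> = 4 * r / sqrt n"
    using n by (simp add: field_simps)
  finally show ?thesis .
next
  case False
  then have "1 \<le> 4 * r / sqrt n" using n r by (simp add: field_simps)
  then show ?thesis using K.prob_le_1[of "UNIV - inner_square n r"] by linarith
qed

lemma kernel_degree_variance_uniform_square_le:
  "K.kernel_degree_variance \<le> (pi * r^2 / n)^2 * (4 * r / sqrt n)"
proof -
  have "K.kernel_degree_variance \<le> (pi * r^2 / n)^2 * K.prob (UNIV - inner_square n r)"
    using K.kernel_degree_variance_le[of "pi * r^2 / n" "inner_square n r"] kernel_degree_uniform_square_le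
      kernel_degree_uniform_square_eq[OF cball_subset_square] by simp
  also have "\<dots> \<le> (pi * r^2 / n)^2 * (4 * r / sqrt n)"
    by (intro mult_left_mono prob_outside_inner_square_le) auto
  finally show ?thesis .
qed

lemma kernel_mean_uniform_square:
  assumes "r \<le> sqrt n"
  shows "K.kernel_mean = (pi * n * r^2 - 8 * sqrt n * r^3 / 3 + r^4 / 2) / n^2"
proof -
  let ?S = "square n" and ?\<phi> = "pi * n * r^2 - 8 * sqrt n * r^3 / 3 + r^4 / 2"
  have \<phi>_nonneg: "0 \<le> ?\<phi>"
    using box_pairs_within_volume_nonneg[OF r assms] by simp
  have degree: "ennreal (K.kernel_degree x)
      = (\<integral>\<^sup>+y. indicator ?S x * indicator ?S y * indicator (cball x r) y \<partial>lborel) / real n"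
    if "x \<in> ?S" for x
    using that by (simp add: kernel_degree_uniform_square indicator_inter_arith[symmetric] Int_def)
  have "ennreal K.kernel_mean = (\<integral>\<^sup>+x. K.kernel_degree x \<partial>uniform_measure lborel ?S)"
    unfolding K.kernel_mean_def using K.kernel_degree_nonneg K.kernel_degree_le_1
    by (subst nn_integral_eq_integral) (auto intro!: K.integrable_const_bound[of _ 1])
  also have "\<dots> = (\<integral>\<^sup>+x. ennreal (K.kernel_degree x) * indicator ?S x \<partial>lborel) / real n"
    by (subst nn_integral_uniform_measure) (auto simp: emeasure_square)
  also have "(\<integral>\<^sup>+x. ennreal (K.kernel_degree x) * indicator ?S x \<partial>lborel)
      = (\<integral>\<^sup>+x. (\<integral>\<^sup>+y. indicator ?S x * indicator ?S y * indicator (cball x r) y \<partial>lborel) / real n \<partial>lborel)"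
    by (intro nn_integral_cong) (auto simp: degree indicator_def)
  also have "\<dots> = (\<integral>\<^sup>+x. \<integral>\<^sup>+y. indicator ?S x * indicator ?S y * indicator (cball x r) y \<partial>lborel \<partial>lborel) / real n"
    by (rule nn_integral_divide) measurable
  also have "(\<integral>\<^sup>+x. \<integral>\<^sup>+y. indicator ?S x * indicator ?S y * indicator (cball x r) y \<partial>lborel \<partial>lborel) = ennreal ?\<phi>"
    using nn_integral_box_pairs_within[OF r assms] by (simp add: square_def)
  finally have "ennreal K.kernel_mean = ennreal (?\<phi> / n^2)"
    using n \<phi>_nonneg by (simp add: divide_ennreal power2_eq_square)
  then show ?thesis
    using \<phi>_nonneg by (simp add: ennreal_inj K.kernel_mean_nonneg)
qed

end

lemma expected_edges_identity:
  fixes r :: real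
  assumes "0 < n"
  shows "real n * (real n - 1) / 2 * ((pi * n * r^2 - 8 * sqrt n * r^3 / 3 + r^4 / 2) / n^2)
    = 1/2 * (real n - 1) * pi * r^2 * (1 - 8 / (3 * pi) * (r / sqrt n) + 1 / (2 * pi) * (r^2 / n))"
proof -
  define L where "L = sqrt n"
  have "0 < L" "real n = L^2" using assms by (simp_all add: L_def)
  then show ?thesis unfolding L_def[symmetric] using pi_gt_zero
    by (simp add: \<open>real n = L^2\<close> field_simps power2_eq_square power3_eq_cube power4_eq_xxxx)
qed

lemma edge_variance_estimate:
  fixes r p V :: real
  assumes n: "0 < n" and r: "0 < r" and p: "p \<le> pi * r^2 / n"
    and V: "V \<le> (pi * r^2 / n)^2 * (4 * r / sqrt n)"
  shows "real n * (real n - 1) / 2 * (p + 2 * real n * V) < 1/2 * pi * n * r^2 + 4 * pi^2 * sqrt n * r^5"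
proof -
  have n1: "0 \<le> real n - 1" using n by simp
  have "real n * (real n - 1) / 2 * p \<le> real n * (real n - 1) / 2 * (pi * r^2 / n)"
    using p n1 by (intro mult_left_mono) auto
  also have "\<dots> < 1/2 * pi * n * r^2"
    using n r by (simp add: field_simps)
  finally have mean_part: "real n * (real n - 1) / 2 * p < 1/2 * pi * n * r^2" .
  have "real n * (real n - 1) / 2 * (2 * real n * V)
      \<le> real n * (real n - 1) / 2 * (2 * real n * ((pi * r^2 / n)^2 * (4 * r / sqrt n)))"
    using V n1 by (intro mult_left_mono) auto
  also have "\<dots> = (real n - 1) * (4 * pi^2 * r^5 / sqrt n)"
    using n by (simp add: field_simps power2_eq_square power_numeral_reduce)
  also have "\<dots> \<le> real n * (4 * pi^2 * r^5 / sqrt n)"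
    using r by (intro mult_right_mono) auto
  also have "\<dots> = 4 * pi^2 * r^5 * (real n / sqrt n)"
    by simp
  also have "\<dots> = 4 * pi^2 * sqrt n * r^5"
    by (simp add: real_div_sqrt)
  finally have "real n * (real n - 1) / 2 * (2 * real n * V) \<le> 4 * pi^2 * sqrt n * r^5" .
  with mean_part show ?thesis by (simp add: distrib_left)
qed

theorem proposition3p1:
  fixes n :: nat and r :: real
  assumes "n > 0" and "0 < r" and "r \<le> sqrt (real n)"
  shows "((\<integral>X. num_edges n r X \<partial>rgg_space n)
           = 1/2 * (real n - 1) * pi * r^2
             * (1 - 8 / (3 * pi) * (r / sqrt (real n)) + 1 / (2 * pi) * (r^2 / real n)))
         \<and> ((\<integral>X. (num_edges n r X - (\<integral>Y. num_edges n r Y \<partial>rgg_space n))^2 \<partial>rgg_space n)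
           < 1/2 * pi * real n * r^2 + 4 * pi^2 * sqrt (real n) * r^5)"
proof
  interpret K: symmetric_kernel "uniform_measure lborel (square n)" "cball_indicator r"
    using assms(1) by (rule symmetric_kernel_cball_indicator)
  have model: "rgg_space n = PiM {..<n} (\<lambda>_. uniform_measure lborel (square n))"
    "num_edges n r = pair_sum (cball_indicator r) n"
    by (simp_all add: rgg_space_def fun_eq_iff num_edges_eq_pair_sum)
  show "(\<integral>X. num_edges n r X \<partial>rgg_space n)
      = 1/2 * (real n - 1) * pi * r^2 * (1 - 8 / (3 * pi) * (r / sqrt n) + 1 / (2 * pi) * (r^2 / n))"
    using kernel_mean_uniform_square[OF assms] expected_edges_identity[OF assms(1)]
    by (simp add: model K.integral_pair_sum card_index_pairs)
  have "(\<integral>X. (num_edges n r X - (\<integral>Y. num_edges n r Y \<partial>rgg_space n))^2 \<partial>rgg_space n)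
      \<le> real n * (real n - 1) / 2 * (K.kernel_mean + 2 * real n * K.kernel_degree_variance)"
    using K.variance_pair_sum_le by (simp add: model card_index_pairs)
  also have "\<dots> < 1/2 * pi * n * r^2 + 4 * pi^2 * sqrt n * r^5"
    by (intro edge_variance_estimate[OF assms(1,2)] K.kernel_mean_le
        kernel_degree_uniform_square_le[OF assms(1,2)] kernel_degree_variance_uniform_square_le[OF assms(1,2)])
  finally show "(\<integral>X. (num_edges n r X - (\<integral>Y. num_edges n r Y \<partial>rgg_space n))^2 \<partial>rgg_space n)
      < 1/2 * pi * n * r^2 + 4 * pi^2 * sqrt n * r^5" .
qed

end
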